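(* Let $0<p_0<1$, $0<\beta\le1$, $0\le\alpha\le1$ with $\alpha\le\beta$, $\epsilon>0$, $\omega\ge0$, $\gamma_0\ge\gamma\ge0$. Let $\omega(t),\epsilon_x(t),\epsilon_y(t),\delta\gamma_t$ be real-valued functions of time with $|\omega(t)|\le\omega$, $\sqrt{\epsilon_x^2(t)+\epsilon_y^2(t)}\le\epsilon$, $|\delta\gamma_t|\le\gamma$, and set $H(t)=[1+\omega(t)]I_z+\epsilon_x(t)I_x+\epsilon_y(t)I_y$, $\gamma_t=\gamma_0+\delta\gamma_t$. Let the qubit density matrix $\rho_t$ evolve according to $$\dot\rho_t=-i[H(t),\rho_t]+\gamma_t\Big(\sigma_-\rho_t\sigma_+-\tfrac12\sigma_+\sigma_-\rho_t-\tfrac12\rho_t\sigma_+\sigma_-\Big)$$ from an initial state $\rho_0$ with $\langle1|\rho_0|1\rangle\le\alpha p_0$. Let $$T_a=\frac{2p_0}{\sqrt{4\epsilon^2+(\gamma_0+\gamma)^2}+(\gamma_0+\gamma)}.$$ Then for every $t\in[0,(1-\beta)T_a]$, $\rho_t\in\mathcal{D}_a=\{\rho:\langle0|\rho|0\rangle\ge1-p_0\}$; equivalently, a projective measurement of $\sigma_z$ at time $t$ has probability of failure $p=\langle1|\rho_t|1\rangle\le p_0$.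
   Context: $\sigma_x,\sigma_y,\sigma_z$ are the Pauli matrices $\begin{pmatrix}0&1\\1&0\end{pmatrix},\begin{pmatrix}0&-i\\i&0\end{pmatrix},\begin{pmatrix}1&0\\0&-1\end{pmatrix}$, $I_j=\frac12\sigma_j$, $\sigma_-=\frac12(\sigma_x-i\sigma_y)$, $\sigma_+=\frac12(\sigma_x+i\sigma_y)$, $[A,B]=AB-BA$. $|0\rangle=(1,0)^T$, $|1\rangle=(0,1)^T$ are the eigenvectors of $\sigma_z$ with eigenvalues $1,-1$. Units with $\hbar=1$. The probability of failure is the probability that a $\sigma_z$ measurement yields $|1\rangle$. *)

theory Defs
  imports "HOL-Analysis.Analysis"
begin

type_synonym cmat2 = "complex^2^2"

text \<open>Basis convention: index 1 corresponds to |0>, index 2 corresponds to |1>.\<close>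

definition mat2 :: "complex \<Rightarrow> complex \<Rightarrow> complex \<Rightarrow> complex \<Rightarrow> cmat2" where
  "mat2 a b c d = (\<chi> i j. if i = 1 then (if j = 1 then a else b) else (if j = 1 then c else d))"

definition sigma_x :: cmat2 where "sigma_x = mat2 0 1 1 0"
definition sigma_y :: cmat2 where "sigma_y = mat2 0 (-\<i>) \<i> 0"
definition sigma_z :: cmat2 where "sigma_z = mat2 1 0 0 (-1)"

definition I_x :: cmat2 where "I_x = (1/2::real) *\<^sub>R sigma_x"
definition I_y :: cmat2 where "I_y = (1/2::real) *\<^sub>R sigma_y"
definition I_z :: cmat2 where "I_z = (1/2::real) *\<^sub>R sigma_z"

definition csmul :: "complex \<Rightarrow> cmat2 \<Rightarrow> cmat2" where
  "csmul c A = (\<chi> i j. c * A $ i $ j)"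

definition sigma_minus :: cmat2 where "sigma_minus = csmul (1/2) (sigma_x - csmul \<i> sigma_y)"
definition sigma_plus :: cmat2 where "sigma_plus = csmul (1/2) (sigma_x + csmul \<i> sigma_y)"

definition commutator :: "cmat2 \<Rightarrow> cmat2 \<Rightarrow> cmat2" where
  "commutator A B = A ** B - B ** A"

definition lindblad_rhs :: "cmat2 \<Rightarrow> real \<Rightarrow> cmat2 \<Rightarrow> cmat2" where
  "lindblad_rhs H g \<rho> =
     csmul (-\<i>) (commutator H \<rho>)
     + g *\<^sub>R (sigma_minus ** \<rho> ** sigma_plus
               - (1/2::real) *\<^sub>R (sigma_plus ** sigma_minus ** \<rho>)
               - (1/2::real) *\<^sub>R (\<rho> ** sigma_plus ** sigma_minus))"

text \<open>Qubit density matrix: positive semidefinite (hence Hermitian) with unit trace.\<close>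
definition density_matrix :: "cmat2 \<Rightarrow> bool" where
  "density_matrix \<rho> \<longleftrightarrow>
     (\<forall>v :: complex^2. let q = (\<Sum>i\<in>UNIV. \<Sum>j\<in>UNIV. cnj (v $ i) * \<rho> $ i $ j * v $ j)
                       in Im q = 0 \<and> Re q \<ge> 0)
     \<and> (\<Sum>i\<in>UNIV. \<rho> $ i $ i) = 1"

definition elem00 :: "cmat2 \<Rightarrow> complex" where "elem00 \<rho> = \<rho> $ 1 $ 1"
definition elem11 :: "cmat2 \<Rightarrow> complex" where "elem11 \<rho> = \<rho> $ 2 $ 2"

definition D_a :: "real \<Rightarrow> cmat2 set" where
  "D_a p0 = {\<rho>. Re (elem00 \<rho>) \<ge> 1 - p0}"

definition T_a :: "real \<Rightarrow> real \<Rightarrow> real \<Rightarrow> real \<Rightarrow> real" where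
  "T_a p0 \<epsilon> \<gamma>0 \<gamma> = 2 * p0 / (sqrt (4 * \<epsilon>^2 + (\<gamma>0 + \<gamma>)^2) + (\<gamma>0 + \<gamma>))"

end

theory Submission
  imports Defs
begin

text \<open>The failure probability is the population of \<open>|1\<rangle>\<close>. Along the master equation its
  rate of change is \<open>\<gamma>\<^sub>t \<langle>0|\<rho>|0\<rangle> + Im ((\<epsilon>\<^sub>x + i \<epsilon>\<^sub>y) \<langle>0|\<rho>|1\<rangle>)\<close>; the detuning \<open>\<omega>(t)\<close> does not enter.
  Positivity of \<open>\<rho>\<close> gives \<open>|\<langle>0|\<rho>|1\<rangle>|\<^sup>2 \<le> \<langle>0|\<rho>|0\<rangle> \<langle>1|\<rho>|1\<rangle>\<close>, and maximising the rate over all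
  such states (a Cauchy--Schwarz estimate) bounds it by the largest eigenvalue
  \<open>M = (\<gamma>\<^sub>0 + \<gamma> + \<surd>(4\<epsilon>\<^sup>2 + (\<gamma>\<^sub>0 + \<gamma>)\<^sup>2)) / 2\<close> of \<open>[[\<gamma>\<^sub>0 + \<gamma>, \<epsilon>], [\<epsilon>, 0]]\<close>. Hence the population grows
  at most linearly with slope \<open>M = p\<^sub>0 / T\<^sub>a\<close>, so from \<open>\<alpha> p\<^sub>0 \<le> \<beta> p\<^sub>0\<close> it needs time \<open>(1 - \<beta>) T\<^sub>a\<close>
  to reach \<open>p\<^sub>0\<close>.\<close>

lemma density_matrix_quadratic_form:
  fixes x y :: complex
  assumes "density_matrix r"
  defines "q \<equiv> cnj x * r$1$1 * x + cnj x * r$1$2 * y + cnj y * r$2$1 * x + cnj y * r$2$2 * y"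
  shows "Im q = 0" and "Re q \<ge> 0"
proof -
  have "(\<Sum>i\<in>UNIV. \<Sum>j\<in>UNIV. cnj ((\<chi> k. if k = 1 then x else y) $ i) * r $ i $ j
          * (\<chi> k. if k = 1 then x else y :: complex^2) $ j) = q"
    unfolding q_def by (simp add: sum_2)
  then have "Im q = 0 \<and> Re q \<ge> 0"
    using assms(1)[unfolded density_matrix_def Let_def, THEN conjunct1, rule_format,
        of "\<chi> k. if k = 1 then x else y"] by (simp only:)
  then show "Im q = 0" and "Re q \<ge> 0"
    by simp_all
qed

lemma density_matrix_diagonal:
  assumes "density_matrix r"
  shows "Im (r$1$1) = 0" "Re (r$1$1) \<ge> 0" "Im (r$2$2) = 0" "Re (r$2$2) \<ge> 0"
  using density_matrix_quadratic_form[OF assms, of 1 0] density_matrix_quadratic_form[OF assms, of 0 1]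
  by simp_all

lemma density_matrix_trace:
  assumes "density_matrix r"
  shows "Re (r$1$1) + Re (r$2$2) = 1"
proof -
  have "r$1$1 + r$2$2 = 1"
    using assms unfolding density_matrix_def by (simp add: sum_2)
  then show ?thesis
    by (metis one_complex.sel(1) plus_complex.sel(1))
qed

lemma density_matrix_hermitian:
  assumes "density_matrix r"
  shows "r$2$1 = cnj (r$1$2)"
proof -
  note diag = density_matrix_diagonal[OF assms]
  have "Im (r$1$2 + r$2$1) = 0"
    using density_matrix_quadratic_form[OF assms, of 1 1] diag by simp
  moreover have "Re (r$1$2) = Re (r$2$1)"
    using density_matrix_quadratic_form[OF assms, of 1 \<i>] diag by simp
  ultimately show ?thesis
    by (simp add: complex_eq_iff)
qed

lemma quadratic_nonneg_imp_le_mult: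
  fixes a b d :: real
  assumes "d \<ge> 0" "b \<ge> 0" and nonneg: "\<And>t. a - 2 * t * b + d * t\<^sup>2 * b \<ge> 0"
  shows "b \<le> a * d"
proof (cases "d > 0")
  case True
  have "a - 2 * (1/d) * b + d * (1/d)\<^sup>2 * b \<ge> 0"
    by (rule nonneg)
  with True show ?thesis
    by (simp add: power2_eq_square field_simps)
next
  case False
  with assms(1) have "d = 0" by simp
  show ?thesis
  proof (rule ccontr)
    assume "\<not> b \<le> a * d"
    with \<open>d = 0\<close> have "b > 0" by simp
    have "a - 2 * ((a + 1) / (2 * b)) * b + d * ((a + 1) / (2 * b))\<^sup>2 * b \<ge> 0"
      by (rule nonneg)
    with \<open>b > 0\<close> \<open>d = 0\<close> show False by simp
  qed
qed

lemma density_matrix_coherence_le: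
  assumes "density_matrix r"
  shows "(cmod (r$1$2))\<^sup>2 \<le> Re (r$1$1) * Re (r$2$2)"
proof (rule quadratic_nonneg_imp_le_mult)
  note diag = density_matrix_diagonal[OF assms]
  show "Re (r$2$2) \<ge> 0" "(cmod (r$1$2))\<^sup>2 \<ge> 0"
    using diag by simp_all
  fix t :: real
  obtain b1 b2 where b: "r$1$2 = Complex b1 b2"
    using complex.exhaust_sel by blast
  have "r$1$1 = Re (r$1$1)" "r$2$2 = Re (r$2$2)"
    using diag by (simp_all add: complex_eq_iff)
  \<comment> \<open>the test vector \<open>(1, -t \<langle>1|\<rho>|0\<rangle>)\<close>\<close>
  then have "Re (cnj 1 * r$1$1 * 1 + cnj 1 * r$1$2 * (-t * cnj (r$1$2))
             + cnj (-t * cnj (r$1$2)) * r$2$1 * 1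
             + cnj (-t * cnj (r$1$2)) * r$2$2 * (-t * cnj (r$1$2)))
        = Re (r$1$1) - 2 * t * (cmod (r$1$2))\<^sup>2 + Re (r$2$2) * t\<^sup>2 * (cmod (r$1$2))\<^sup>2"
    unfolding density_matrix_hermitian[OF assms] b
    by (simp add: cmod_def power2_eq_square algebra_simps)
  with density_matrix_quadratic_form(2)[OF assms]
  show "Re (r$1$1) - 2 * t * (cmod (r$1$2))\<^sup>2 + Re (r$2$2) * t\<^sup>2 * (cmod (r$1$2))\<^sup>2 \<ge> 0"
    by metis
qed

lemma mat2_nth:
  "mat2 a b c d $ 1 $ 1 = a" "mat2 a b c d $ 1 $ 2 = b"
  "mat2 a b c d $ 2 $ 1 = c" "mat2 a b c d $ 2 $ 2 = d"
  by (simp_all add: mat2_def)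

lemma lindblad_rhs_excited_entry:
  fixes w ex ey g :: real
  shows "lindblad_rhs ((1 + w) *\<^sub>R I_z + ex *\<^sub>R I_x + ey *\<^sub>R I_y) g r $ 2 $ 2
       = -\<i> * ((ex + \<i> * ey) / 2 * r$1$2 - r$2$1 * (ex - \<i> * ey) / 2) + g * r$1$1"
  unfolding lindblad_rhs_def commutator_def matrix_matrix_mult_def csmul_def
    sigma_minus_def sigma_plus_def sigma_x_def sigma_y_def sigma_z_def I_x_def I_y_def I_z_def
  by (simp add: sum_2 mat2_nth vector_scaleR_component)
     (simp add: algebra_simps scaleR_conv_of_real add_divide_distrib diff_divide_distrib)

lemma Re_lindblad_rhs_excited_entry:
  fixes w ex ey g :: real
  assumes "r$2$1 = cnj (r$1$2)"
  shows "Re (lindblad_rhs ((1 + w) *\<^sub>R I_z + ex *\<^sub>R I_x + ey *\<^sub>R I_y) g r $ 2 $ 2)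
       = Im ((ex + \<i> * ey) * r$1$2) + g * Re (r$1$1)"
  unfolding lindblad_rhs_excited_entry assms by (simp add: field_simps)

definition max_leak_rate :: "real \<Rightarrow> real \<Rightarrow> real" where
  "max_leak_rate G e = (G + sqrt (G\<^sup>2 + 4 * e\<^sup>2)) / 2"

lemma max_leak_rate_pos:
  assumes "G \<ge> 0" "e \<noteq> 0"
  shows "max_leak_rate G e > 0"
proof -
  have "sqrt (G\<^sup>2 + 4 * e\<^sup>2) > 0"
    using assms(2) by (simp add: add_nonneg_pos)
  with assms(1) show ?thesis
    unfolding max_leak_rate_def by (intro half_gt_zero add_nonneg_pos)
qed

lemma T_a_eq_divide_max_leak_rate: "T_a p0 e \<gamma>0 \<gamma> = p0 / max_leak_rate (\<gamma>0 + \<gamma>) e"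
  unfolding T_a_def max_leak_rate_def by (simp add: add.commute)

lemma weighted_population_coherence_le:
  fixes a s g G e :: real
  assumes "s\<^sup>2 \<le> a * (1 - a)" "g \<le> G"
  shows "g * a + e * s \<le> max_leak_rate G e"
proof -
  define x where "x = a - 1/2"
  define K where "K = G\<^sup>2 + 4 * e\<^sup>2"
  have "a \<ge> 0"
  proof (rule ccontr)
    assume "\<not> a \<ge> 0"
    then have "a * (1 - a) < 0" by (simp add: mult_neg_pos)
    with assms(1) show False by (smt (verit) zero_le_power2)
  qed
  \<comment> \<open>Lagrange's identity, i.e.\ the Cauchy--Schwarz inequality for \<open>(G, 2e) \<cdot> (x, s/2)\<close>\<close>
  have "(G * x + e * s)\<^sup>2 + (G * s / 2 - 2 * e * x)\<^sup>2 = K * (x\<^sup>2 + s\<^sup>2 / 4)"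
    unfolding K_def by (simp add: power2_eq_square algebra_simps)
  also have "\<dots> \<le> K * (1/4)"
  proof -
    have "s\<^sup>2 \<le> 1/4 - x\<^sup>2"
      using assms(1) unfolding x_def by (simp add: power2_eq_square algebra_simps)
    then have "x\<^sup>2 + s\<^sup>2 / 4 \<le> 1/4"
      using zero_le_power2[of s] by linarith
    then show ?thesis
      unfolding K_def by (intro mult_left_mono) simp_all
  qed
  also have "\<dots> = (sqrt K / 2)\<^sup>2"
    unfolding K_def by (simp add: power_divide)
  finally have "(G * x + e * s)\<^sup>2 \<le> (sqrt K / 2)\<^sup>2"
    by (smt (verit) zero_le_power2)
  then have "G * x + e * s \<le> sqrt K / 2"
    by (rule power2_le_imp_le) (simp add: K_def)
  moreover have "g * a \<le> G * a"
    using \<open>a \<ge> 0\<close> assms(2) by (rule mult_right_mono[rotated])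
  ultimately show ?thesis
    unfolding max_leak_rate_def x_def K_def by (simp add: algebra_simps)
qed

lemma excited_population_rate_le:
  fixes w ex ey e g G :: real
  assumes "density_matrix r" "sqrt (ex\<^sup>2 + ey\<^sup>2) \<le> e" "g \<le> G"
  shows "Re (lindblad_rhs ((1 + w) *\<^sub>R I_z + ex *\<^sub>R I_x + ey *\<^sub>R I_y) g r $ 2 $ 2)
       \<le> max_leak_rate G e"
proof -
  have "Im ((ex + \<i> * ey) * r$1$2) \<le> cmod ((ex + \<i> * ey) * r$1$2)"
    using abs_Im_le_cmod abs_le_D1 by blast
  also have "\<dots> = sqrt (ex\<^sup>2 + ey\<^sup>2) * cmod (r$1$2)"
    unfolding norm_mult by (simp add: cmod_def)
  also have "\<dots> \<le> e * cmod (r$1$2)"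
    using assms(2) by (rule mult_right_mono) simp
  finally have "Im ((ex + \<i> * ey) * r$1$2) \<le> e * cmod (r$1$2)" .
  moreover have "(cmod (r$1$2))\<^sup>2 \<le> Re (r$1$1) * (1 - Re (r$1$1))"
    using density_matrix_coherence_le[OF assms(1)] density_matrix_trace[OF assms(1)]
    by (metis add_diff_cancel_left')
  then have "g * Re (r$1$1) + e * cmod (r$1$2) \<le> max_leak_rate G e"
    using assms(3) by (rule weighted_population_coherence_le)
  ultimately show ?thesis
    unfolding Re_lindblad_rhs_excited_entry[OF density_matrix_hermitian[OF assms(1)]] by simp
qed

lemma growth_le_of_derivative_le:
  fixes f f' :: "real \<Rightarrow> real"
  assumes "a \<le> b"
    and "\<And>x. x \<in> {a..b} \<Longrightarrow> (f has_real_derivative f' x) (at x within {a..b})"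
    and "\<And>x. x \<in> {a..b} \<Longrightarrow> f' x \<le> M"
  shows "f b \<le> f a + M * (b - a)"
proof -
  have "\<exists>x\<in>{a..b}. f b - f a = (b - a) * f' x"
    using assms(2) unfolding has_field_derivative_def mult.commute[of _ "f' _"]
    by (intro mvt_very_simple[OF assms(1)]) auto
  then obtain x where "x \<in> {a..b}" "f b - f a = (b - a) * f' x" ..
  moreover have "(b - a) * f' x \<le> (b - a) * M"
    using assms(1,3) \<open>x \<in> {a..b}\<close> by (intro mult_left_mono) auto
  ultimately show ?thesis
    by (simp add: algebra_simps)
qed

lemma has_real_derivative_Re_entry:
  fixes \<rho> :: "real \<Rightarrow> complex^'n^'m"
  assumes "(\<rho> has_vector_derivative D) F"
  shows "((\<lambda>t. Re (\<rho> t $ i $ j)) has_real_derivative Re (D $ i $ j)) F"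
proof -
  have "bounded_linear (\<lambda>A :: complex^'n^'m. Re (A $ i $ j))"
    by (intro bounded_linear_compose[OF bounded_linear_Re] bounded_linear_compose[OF bounded_linear_vec_nth]
        bounded_linear_vec_nth)
  from bounded_linear.has_vector_derivative[OF this assms] show ?thesis
    by (simp add: has_real_derivative_iff_has_vector_derivative)
qed

lemma excited_population_le:
  fixes w ex ey g :: "real \<Rightarrow> real" and e G t :: real and \<rho> :: "real \<Rightarrow> complex^2^2"
  assumes "\<And>s. s \<ge> 0 \<Longrightarrow> density_matrix (\<rho> s)"
    and "\<And>s. s \<ge> 0 \<Longrightarrow>
           (\<rho> has_vector_derivative
              lindblad_rhs ((1 + w s) *\<^sub>R I_z + ex s *\<^sub>R I_x + ey s *\<^sub>R I_y) (g s) (\<rho> s))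
           (at s within {0..})"
    and "\<And>s. sqrt ((ex s)\<^sup>2 + (ey s)\<^sup>2) \<le> e"
    and "\<And>s. g s \<le> G"
    and "t \<ge> 0"
  shows "Re (\<rho> t $ 2 $ 2) \<le> Re (\<rho> 0 $ 2 $ 2) + max_leak_rate G e * t"
proof -
  have "Re (\<rho> t $ 2 $ 2) \<le> Re (\<rho> 0 $ 2 $ 2) + max_leak_rate G e * (t - 0)"
  proof (rule growth_le_of_derivative_le[OF \<open>t \<ge> 0\<close>])
    fix s assume s: "s \<in> {0..t}"
    show "((\<lambda>t. Re (\<rho> t $ 2 $ 2)) has_real_derivative
            Re (lindblad_rhs ((1 + w s) *\<^sub>R I_z + ex s *\<^sub>R I_x + ey s *\<^sub>R I_y) (g s) (\<rho> s) $ 2 $ 2))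
          (at s within {0..t})"
      by (rule DERIV_subset[OF has_real_derivative_Re_entry[OF assms(2)]]) (use s in auto)
    show "Re (lindblad_rhs ((1 + w s) *\<^sub>R I_z + ex s *\<^sub>R I_x + ey s *\<^sub>R I_y) (g s) (\<rho> s) $ 2 $ 2)
          \<le> max_leak_rate G e"
      by (rule excited_population_rate_le[OF assms(1) assms(3,4)]) (use s in auto)
  qed
  then show ?thesis
    by simp
qed

theorem theorem3:
  fixes p0 \<beta> \<alpha> \<epsilon> \<omega> \<gamma>0 \<gamma> :: real
    and w \<epsilon>x \<epsilon>y \<delta>\<gamma> :: "real \<Rightarrow> real"
    and \<rho> :: "real \<Rightarrow> complex^2^2"
  assumes "0 < p0" "p0 < 1"
    and "0 < \<beta>" "\<beta> \<le> 1"
    and "0 \<le> \<alpha>" "\<alpha> \<le> 1" "\<alpha> \<le> \<beta>"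
    and "\<epsilon> > 0" "\<omega> \<ge> 0" "\<gamma>0 \<ge> \<gamma>" "\<gamma> \<ge> 0"
    and "\<And>t. \<bar>w t\<bar> \<le> \<omega>"
    and "\<And>t. sqrt ((\<epsilon>x t)^2 + (\<epsilon>y t)^2) \<le> \<epsilon>"
    and "\<And>t. \<bar>\<delta>\<gamma> t\<bar> \<le> \<gamma>"
    and "\<And>t. t \<ge> 0 \<Longrightarrow> density_matrix (\<rho> t)"
    and "\<And>t. t \<ge> 0 \<Longrightarrow>
           (\<rho> has_vector_derivative
              lindblad_rhs ((1 + w t) *\<^sub>R I_z + \<epsilon>x t *\<^sub>R I_x + \<epsilon>y t *\<^sub>R I_y)
                           (\<gamma>0 + \<delta>\<gamma> t) (\<rho> t))
           (at t within {0..})"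
    and "Re (elem11 (\<rho> 0)) \<le> \<alpha> * p0"
  shows "\<forall>t \<in> {0 .. (1 - \<beta>) * T_a p0 \<epsilon> \<gamma>0 \<gamma>}.
           \<rho> t \<in> D_a p0 \<and> Re (elem11 (\<rho> t)) \<le> p0"
proof
  define M where "M = max_leak_rate (\<gamma>0 + \<gamma>) \<epsilon>"
  have "M > 0"
    unfolding M_def using assms(8,10,11) by (intro max_leak_rate_pos) auto
  fix t assume "t \<in> {0 .. (1 - \<beta>) * T_a p0 \<epsilon> \<gamma>0 \<gamma>}"
  then have "0 \<le> t" "M * t \<le> (1 - \<beta>) * p0"
    using \<open>M > 0\<close> unfolding T_a_eq_divide_max_leak_rate M_def[symmetric]
    by (auto simp: field_simps)
  have "\<gamma>0 + \<delta>\<gamma> s \<le> \<gamma>0 + \<gamma>" for s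
    using abs_le_D1[OF assms(14)] by simp
  from excited_population_le[OF assms(15,16,13) this \<open>0 \<le> t\<close>]
  have "Re (\<rho> t $ 2 $ 2) \<le> Re (\<rho> 0 $ 2 $ 2) + M * t"
    unfolding M_def .
  moreover have "\<alpha> * p0 \<le> \<beta> * p0"
    using assms(1,7) by (simp add: mult_right_mono)
  ultimately have "Re (\<rho> t $ 2 $ 2) \<le> p0"
    using assms(17) \<open>M * t \<le> (1 - \<beta>) * p0\<close> unfolding elem11_def by (simp add: algebra_simps)
  moreover have "Re (\<rho> t $ 1 $ 1) + Re (\<rho> t $ 2 $ 2) = 1"
    using density_matrix_trace assms(15) \<open>0 \<le> t\<close> by blast
  ultimately show "\<rho> t \<in> D_a p0 \<and> Re (elem11 (\<rho> t)) \<le> p0"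
    unfolding D_a_def elem00_def elem11_def by auto
qed

end
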